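(* For every agent $i\in[n]$, every price $p>0$, every ordering $\pi$ of $[n]$, and every $\beta>0$, \[ \mathbb{E}_{\mathbf v\sim\mathcal F}[u_i(\mathbf v,p,\pi)]\;\ge\;\beta\Big(\mathbb{E}_{\mathbf v\sim\mathcal F}[v_i(x_i(\mathbf v))]-p\,\mathbb{E}_{\mathbf v\sim\mathcal F}[x_i(\mathbf v)]\Big)\cdot\Big(1-e^{-1/\beta}-\int_0^{1-e^{-1/\beta}}\Pr_{\mathbf v\sim\mathcal F}\Big[\sum_{j\in B_\pi(i)}y^*_j(v_j,p)\ge t\Big]\,dt\Big), \] where $B_\pi(i)$ is the set of agents that act before $i$ in $\pi$.
   Context: There are $n$ agents, identified with $[n]=\{1,\dots,n\}$, and one perfectly divisible item of size $1$. Each agent $i$ has a valuation function $v_i:[0,1]\to\mathbb{R}_{\ge0}$ that is non-decreasing and concave; $v_i$ is drawn from a publicly known distribution $\mathcal F_i$ over such functions, independently across agents, and $\mathbf v=(v_1,\dots,v_n)\sim\mathcal F=\mathcal F_1\times\cdots\times\mathcal F_n$. All expectations below are assumed finite. Sequential posted pricing with linear pricing uses a price $p>0$ per unit and an ordering $\pi$ (a permutation of $[n]$): agents act one at a time in the order $\pi$; when agent $i$ acts she may buy any fraction of the still-unallocated part of the item, paying $p$ per unit, and her utility from buying a fraction $z$ is $v_i(z)-pz$. For each agent $i$ and price $p$, $y^*_i(v_i,p)\in[0,1]$ denotes a maximizer of $z\mapsto v_i(z)-pz$ over $[0,1]$ (a fixed measurable selection), i.e. the fraction she would buy if she were alone.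 For an agent $i$, let $B_\pi(i)$ be the set of agents acting before $i$ in $\pi$. The fraction agent $i$ actually buys is $y_i(\mathbf v,p,\pi)=\min\{y^*_i(v_i,p),\max\{0,1-\sum_{j\in B_\pi(i)}y^*_j(v_j,p)\}\}$ (by concavity this maximizes her utility over the available amount); hence $\sum_{j\in[n]}y_j(\mathbf v,p,\pi)=\min\{1,\sum_{j\in[n]}y^*_j(v_j,p)\}$. Her utility is $u_i(\mathbf v,p,\pi)=v_i(y_i(\mathbf v,p,\pi))-p\,y_i(\mathbf v,p,\pi)$. $x(\mathbf v)=(x_1(\mathbf v),\dots,x_n(\mathbf v))$ denotes a (measurably selected) welfare-maximizing allocation: $x_i(\mathbf v)\ge0$, $\sum_i x_i(\mathbf v)=1$, maximizing $\sum_i v_i(x_i)$. *)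

theory Defs
  imports "HOL-Probability.Probability"
begin

text \<open>Agents are 0, ..., n-1. A valuation is a function real to real, meaningful on [0,1].\<close>

definition valuation :: "(real \<Rightarrow> real) \<Rightarrow> bool" where
  "valuation v \<longleftrightarrow> mono_on {0..1} v \<and> concave_on {0..1} v \<and> (\<forall>z\<in>{0..1}. 0 \<le> v z)"

text \<open>An ordering: pi permutes the agents, pi i is the position at which agent i acts.\<close>
definition before :: "nat \<Rightarrow> (nat \<Rightarrow> nat) \<Rightarrow> nat \<Rightarrow> nat set" where
  "before n \<pi> i = {j \<in> {..<n}. \<pi> j < \<pi> i}"

definition is_demand :: "(real \<Rightarrow> real) \<Rightarrow> real \<Rightarrow> real \<Rightarrow> bool" where
  "is_demand v p y \<longleftrightarrow> y \<in> {0..1} \<and> (\<forall>z\<in>{0..1}. v z - p * z \<le> v y - p * y)"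

definition bought ::
  "nat \<Rightarrow> (nat \<Rightarrow> (real \<Rightarrow> real) \<Rightarrow> real \<Rightarrow> real) \<Rightarrow> (nat \<Rightarrow> real \<Rightarrow> real)
     \<Rightarrow> real \<Rightarrow> (nat \<Rightarrow> nat) \<Rightarrow> nat \<Rightarrow> real" where
  "bought n ystar v p \<pi> i =
     min (ystar i (v i) p) (max 0 (1 - (\<Sum>j\<in>before n \<pi> i. ystar j (v j) p)))"

definition utility ::
  "nat \<Rightarrow> (nat \<Rightarrow> (real \<Rightarrow> real) \<Rightarrow> real \<Rightarrow> real) \<Rightarrow> (nat \<Rightarrow> real \<Rightarrow> real)
     \<Rightarrow> real \<Rightarrow> (nat \<Rightarrow> nat) \<Rightarrow> nat \<Rightarrow> real" where
  "utility n ystar v p \<pi> i =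
     v i (bought n ystar v p \<pi> i) - p * bought n ystar v p \<pi> i"

definition welfare_opt :: "nat \<Rightarrow> (nat \<Rightarrow> real \<Rightarrow> real) \<Rightarrow> (nat \<Rightarrow> real) \<Rightarrow> bool" where
  "welfare_opt n v x \<longleftrightarrow>
     (\<forall>i<n. 0 \<le> x i) \<and> (\<Sum>i<n. x i) = 1 \<and>
     (\<forall>z. (\<forall>i<n. 0 \<le> z i) \<and> (\<Sum>i<n. z i) = 1 \<longrightarrow> (\<Sum>i<n. v i (z i)) \<le> (\<Sum>i<n. v i (x i)))"

end

theory Submission
  imports Defs
begin

text \<open>Let \<open>S\<close> be the total stand-alone demand of the agents acting before \<open>i\<close>. Agent \<open>i\<close> can
  still buy \<open>min y\<^sup>* (1 - S)\<^sup>+\<close>, and by concavity of \<open>v\<^sub>i\<close> this earns her at least the fraction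
  \<open>(1 - S)\<^sup>+\<close> of her stand-alone utility \<open>U\<^sub>i = max\<^sub>z v\<^sub>i z - p z\<close>. As \<open>S\<close> depends only on the
  other agents' valuations, \<open>E[u\<^sub>i] \<ge> E[(1 - S)\<^sup>+] E[U\<^sub>i]\<close>, and \<open>U\<^sub>i \<ge> v\<^sub>i(x\<^sub>i) - p x\<^sub>i\<close> pointwise.
  Finally \<open>c = 1 - exp (-1/\<beta>) \<le> 1/\<beta>\<close> gives \<open>\<beta> (c - min c S) \<le> (1 - S)\<^sup>+\<close>, and
  \<open>E[min c S] = \<integral>\<^sub>0\<^sup>c Pr[S \<ge> t] dt\<close> is the layer-cake formula.\<close>

lemma demand_utility_scaled_le:
  assumes w: "valuation w" and d: "is_demand w p y" and a0: "0 \<le> a" and a1: "a \<le> 1"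
  shows "a * (w y - p * y) \<le> w (min y a) - p * min y a"
proof -
  have y: "0 \<le> y" "y \<le> 1" and opt: "\<And>z. z \<in> {0..1} \<Longrightarrow> w z - p * z \<le> w y - p * y"
    using d unfolding is_demand_def by auto
  have w0: "0 \<le> w 0" using w unfolding valuation_def by auto
  have gy: "0 \<le> w y - p * y" using opt[of 0] w0 by simp
  show ?thesis
  proof (cases "y \<le> a")
    case True
    then show ?thesis using mult_right_mono[OF a1 gy] by simp
  next
    case False
    then have ypos: "0 < y" using a0 by simp
    define t where "t = a / y"
    have t: "0 \<le> t" "t \<le> 1" "a \<le> t"
      using a0 False ypos y by (auto simp: t_def le_divide_eq mult_left_le)
    have "(1 - t) * w 0 + t * w y \<le> w ((1 - t) *\<^sub>R 0 + t *\<^sub>R y)"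
      using w t y unfolding valuation_def by (intro concave_onD) auto
    also have "(1 - t) *\<^sub>R 0 + t *\<^sub>R y = a" using ypos by (simp add: t_def)
    finally have wa: "t * w y \<le> w a" using t w0 by (smt (verit) mult_nonneg_nonneg)
    have "a * (w y - p * y) \<le> t * (w y - p * y)" using t gy by (simp add: mult_right_mono)
    also have "\<dots> = t * w y - p * a" using ypos by (simp add: t_def algebra_simps)
    also have "\<dots> \<le> w a - p * a" using wa by simp
    finally show ?thesis using False by simp
  qed
qed

lemma valuation_isCont:
  assumes "valuation w" and "z \<in> {0<..<1}"
  shows "isCont w z"
proof -
  have "convex_on {0<..<1} (\<lambda>x. - w x)"
    using assms(1) unfolding valuation_def concave_on_def
    by (auto intro: convex_on_subset)
  then have "continuous_on {0<..<1} (\<lambda>x. - (- w x))"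
    by (intro continuous_on_minus convex_on_continuous) auto
  then show ?thesis
    using assms(2) by (simp add: continuous_on_eq_continuous_at)
qed

text \<open>The supremum ranges over rational quantities only, so that it is a countable supremum of
  evaluations and hence measurable in \<open>w\<close>; by continuity it is still attained at any demand.\<close>

definition indirect_utility :: "real \<Rightarrow> (real \<Rightarrow> real) \<Rightarrow> real" where
  "indirect_utility p w = (SUP q \<in> \<rat> \<inter> {0..1}. w q - p * q)"

lemma bdd_above_utilities:
  assumes "is_demand w p y"
  shows "bdd_above ((\<lambda>q. w q - p * q) ` (\<rat> \<inter> {0..1}))"
  using assms unfolding is_demand_def by (intro bdd_aboveI2[where M = "w y - p * y"]) auto

lemma indirect_utility_eq:
  assumes w: "valuation w" and d: "is_demand w p y"
  shows "indirect_utility p w = w y - p * y"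
proof (rule antisym)
  show "indirect_utility p w \<le> w y - p * y"
    using d unfolding indirect_utility_def is_demand_def by (intro cSUP_least) auto
  have upper: "w q - p * q \<le> indirect_utility p w" if "q \<in> \<rat> \<inter> {0..1}" for q
    unfolding indirect_utility_def using that by (intro cSUP_upper bdd_above_utilities[OF d])
  have y: "y \<in> {0..1}" using d by (simp add: is_demand_def)
  show "w y - p * y \<le> indirect_utility p w"
  proof (cases "y \<in> {0<..<1}")
    case False
    with y have "y = 0 \<or> y = 1" by auto
    moreover have "w 0 - p * 0 \<le> indirect_utility p w" "w 1 - p * 1 \<le> indirect_utility p w"
      by (rule upper; simp)+
    ultimately show ?thesis by auto
  next
    case True
    define a b where "a = y / 2" and "b = (1 + y) / 2"
    have ab: "0 < a" "a < y" "y < b" "b < 1" using True by (auto simp: a_def b_def)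
    have closure: "closure ({a<..<b} \<inter> \<rat>) = {a..b}"
      using ab Rats_closure_real by (subst closure_open_Int_superset) auto
    show ?thesis
    proof (rule continuous_le_on_closure[where S = "{a<..<b} \<inter> \<rat>" and f = "\<lambda>q. w q - p * q"])
      show "continuous_on (closure ({a<..<b} \<inter> \<rat>)) (\<lambda>q. w q - p * q)"
        unfolding closure using ab valuation_isCont[OF w]
        by (intro continuous_at_imp_continuous_on continuous_intros) auto
      show "y \<in> closure ({a<..<b} \<inter> \<rat>)" using closure ab by simp
      show "w q - p * q \<le> indirect_utility p w" if "q \<in> {a<..<b} \<inter> \<rat>" for q
        using that ab by (intro upper) auto
    qed
  qed
qed

lemma indirect_utility_nonneg:
  assumes "valuation w" and "is_demand w p y"
  shows "0 \<le> indirect_utility p w"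
  using assms by (force simp: indirect_utility_eq is_demand_def valuation_def)

lemma borel_measurable_indirect_utility:
  assumes "\<And>z. (\<lambda>w. w z) \<in> borel_measurable N"
    and "\<And>w. w \<in> space N \<Longrightarrow> is_demand w p (y w)"
  shows "indirect_utility p \<in> borel_measurable N"
  unfolding indirect_utility_def
proof (rule borel_measurable_cSUP)
  show "countable (\<rat> \<inter> {0..1::real})" by (rule countable_Int1[OF countable_rat])
  show "(\<lambda>w. w q - p * q) \<in> borel_measurable N" for q
    by (intro borel_measurable_diff assms(1) borel_measurable_const)
  show "bdd_above ((\<lambda>q. w q - p * q) ` (\<rat> \<inter> {0..1}))" if "w \<in> space N" for w
    using bdd_above_utilities assms(2)[OF that] .
qed

lemma utility_ge_residual_mult_indirect_utility:
  assumes "valuation (v i)" and "is_demand (v i) p (ystar i (v i) p)"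
    and "0 \<le> (\<Sum>j\<in>before n \<pi> i. ystar j (v j) p)"
  shows "max 0 (1 - (\<Sum>j\<in>before n \<pi> i. ystar j (v j) p)) * indirect_utility p (v i)
    \<le> utility n ystar v p \<pi> i"
  using demand_utility_scaled_le[OF assms(1,2)] assms
  by (simp add: indirect_utility_eq utility_def bought_def)

lemma welfare_opt_share_bounds:
  assumes "welfare_opt n v x" and "i < n"
  shows "0 \<le> x i" "x i \<le> 1"
proof -
  show "0 \<le> x i" using assms by (simp add: welfare_opt_def)
  have "x i \<le> (\<Sum>j<n. x j)" using assms by (intro member_le_sum) (auto simp: welfare_opt_def)
  then show "x i \<le> 1" using assms(1) by (simp add: welfare_opt_def)
qed

lemma (in product_prob_space) nn_integral_PiM_insert_mult_component:
  assumes J: "finite J" "i \<notin> J"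
    and B: "B \<in> borel_measurable (PiM J M)" "B \<in> borel_measurable (PiM (insert i J) M)"
    and B0: "\<And>x. 0 \<le> B x" and B_indep: "\<And>x y. B (x(i := y)) = B x"
    and H: "H \<in> borel_measurable (M i)" and H0: "\<And>y. y \<in> space (M i) \<Longrightarrow> 0 \<le> H y"
  shows "(\<integral>\<^sup>+x. ennreal (B x * H (x i)) \<partial>PiM (insert i J) M)
    = (\<integral>\<^sup>+x. ennreal (B x) \<partial>PiM J M) * (\<integral>\<^sup>+y. ennreal (H y) \<partial>M i)"
proof -
  note [measurable] = B H
  have "(\<integral>\<^sup>+x. ennreal (B x * H (x i)) \<partial>PiM (insert i J) M)
      = (\<integral>\<^sup>+x. (\<integral>\<^sup>+y. ennreal (B (x(i := y)) * H ((x(i := y)) i)) \<partial>M i) \<partial>PiM J M)"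
    by (rule product_nn_integral_insert[OF J]) measurable
  also have "\<dots> = (\<integral>\<^sup>+x. ennreal (B x) * (\<integral>\<^sup>+y. ennreal (H y) \<partial>M i) \<partial>PiM J M)"
    by (rule nn_integral_cong, subst nn_integral_cmult[symmetric])
      (use H H0 in \<open>auto simp: B_indep ennreal_mult B0 intro!: nn_integral_cong\<close>)
  also have "\<dots> = (\<integral>\<^sup>+x. ennreal (B x) \<partial>PiM J M) * (\<integral>\<^sup>+y. ennreal (H y) \<partial>M i)"
    by (simp add: nn_integral_multc)
  finally show ?thesis .
qed

lemma nn_integral_PiM_mult_component:
  fixes F :: "'i \<Rightarrow> 'a measure" and A :: "('i \<Rightarrow> 'a) \<Rightarrow> real" and H :: "'a \<Rightarrow> real"
  assumes prob: "\<And>j. j \<in> I \<Longrightarrow> prob_space (F j)" and fin: "finite I" and i: "i \<in> I"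
    and A: "A \<in> borel_measurable (PiM (I - {i}) F)" and A0: "\<And>x. 0 \<le> A x"
    and A_indep: "\<And>x y. A (x(i := y)) = A x"
    and H: "H \<in> borel_measurable (F i)" and H0: "\<And>y. y \<in> space (F i) \<Longrightarrow> 0 \<le> H y"
  shows "(\<integral>\<^sup>+x. ennreal (A x * H (x i)) \<partial>PiM I F)
    = (\<integral>\<^sup>+x. ennreal (A x) \<partial>PiM I F) * (\<integral>\<^sup>+x. ennreal (H (x i)) \<partial>PiM I F)"
proof -
  define J where "J = I - {i}"
  have J: "finite J" "i \<notin> J" and I: "I = insert i J" using i fin by (auto simp: J_def)
  \<comment> \<open>\<open>product_prob_space\<close> needs a probability space at every index, so extend \<open>F\<close> outside \<open>I\<close>.\<close>
  define F' where "F' j = (if j \<in> I then F j else count_space {undefined})" for j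
  interpret F': prob_space "F' j" for j
    using prob by (cases "j \<in> I") (auto intro!: prob_spaceI simp: F'_def)
  interpret product_prob_space F' by unfold_locales
  have PiM_F': "PiM K F = PiM K F'" if "K \<subseteq> I" for K
    using that by (intro PiM_cong) (auto simp: F'_def)
  have F'i: "F' i = F i" using i by (simp add: F'_def)
  have A_J: "A \<in> borel_measurable (PiM J F')"
    using A PiM_F'[of J] by (simp add: J_def)
  have "A x = A (restrict x J)" if "x \<in> space (PiM I F')" for x
  proof -
    have "restrict x J = x(i := undefined)"
      using that I J by (auto simp: space_PiM PiE_def extensional_def restrict_def)
    then show ?thesis by (simp add: A_indep)
  qed
  then have A_I: "A \<in> borel_measurable (PiM (insert i J) F')"
    using measurable_compose[OF measurable_restrict_subset[of J I F'] A_J] I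
    by (subst measurable_cong) (auto simp del: insert_Diff_single)
  have H': "H \<in> borel_measurable (F' i)" "\<And>y. y \<in> space (F' i) \<Longrightarrow> 0 \<le> H y"
    using H H0 F'i by auto
  have "(\<integral>\<^sup>+x. ennreal (A x * 1) \<partial>PiM (insert i J) F')
      = (\<integral>\<^sup>+x. ennreal (A x) \<partial>PiM J F') * (\<integral>\<^sup>+y. ennreal 1 \<partial>F' i)"
    by (rule nn_integral_PiM_insert_mult_component[OF J A_J A_I A0 A_indep]) auto
  moreover have "(\<integral>\<^sup>+y. ennreal 1 \<partial>F' i) = 1" using F'.emeasure_space_1 by simp
  moreover have "(\<integral>\<^sup>+x. ennreal (1 * H (x i)) \<partial>PiM (insert i J) F')
      = (\<integral>\<^sup>+x. ennreal 1 \<partial>PiM J F') * (\<integral>\<^sup>+y. ennreal (H y) \<partial>F' i)"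
    by (rule nn_integral_PiM_insert_mult_component[OF J _ _ _ _ H']) auto
  moreover have "(\<integral>\<^sup>+x. ennreal 1 \<partial>PiM J F') = 1"
    using prob_space.emeasure_space_1[OF prob_space_PiM[of J F']] F'.prob_space_axioms by simp
  moreover have "PiM I F = PiM (insert i J) F'" using PiM_F'[of I] I by simp
  ultimately show ?thesis
    using nn_integral_PiM_insert_mult_component[OF J A_J A_I A0 A_indep H'] F'i by simp
qed

lemma (in prob_space) nn_integral_measure_ge_eq_nn_integral_min:
  assumes S[measurable]: "S \<in> borel_measurable M"
    and S0: "\<And>v. v \<in> space M \<Longrightarrow> 0 \<le> S v" and c0: "0 \<le> c"
  shows "(\<integral>\<^sup>+t. ennreal (indicator {0..c} t * measure M {v \<in> space M. S v \<ge> t}) \<partial>lborel)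
    = (\<integral>\<^sup>+v. ennreal (min c (S v)) \<partial>M)"
proof -
  interpret lborel_M: pair_sigma_finite lborel M
    by (intro pair_sigma_finite.intro lborel.sigma_finite_measure_axioms sigma_finite_measure)
  define f where "f t v = (if 0 \<le> t \<and> t \<le> c \<and> t \<le> S v then 1 else 0 :: ennreal)" for t v
  have [measurable]: "case_prod f \<in> borel_measurable (lborel \<Otimes>\<^sub>M M)"
    unfolding f_def by measurable
  have integral_t: "(\<integral>\<^sup>+v. f t v \<partial>M) = ennreal (indicator {0..c} t * measure M {v \<in> space M. S v \<ge> t})"
    for t
  proof (cases "0 \<le> t \<and> t \<le> c")
    case True
    then have "(\<integral>\<^sup>+v. f t v \<partial>M) = (\<integral>\<^sup>+v. indicator {v \<in> space M. S v \<ge> t} v \<partial>M)"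
      by (intro nn_integral_cong) (auto simp: f_def indicator_def)
    then show ?thesis using True by (simp add: emeasure_eq_measure)
  qed (auto simp: f_def)
  have integral_v: "(\<integral>\<^sup>+t. f t v \<partial>lborel) = ennreal (min c (S v))" if "v \<in> space M" for v
  proof -
    have "(\<integral>\<^sup>+t. f t v \<partial>lborel) = (\<integral>\<^sup>+t. indicator {0..min c (S v)} t \<partial>lborel)"
      by (intro nn_integral_cong) (auto simp: f_def indicator_def)
    then show ?thesis using S0[OF that] c0 by simp
  qed
  have "(\<integral>\<^sup>+t. (\<integral>\<^sup>+v. f t v \<partial>M) \<partial>lborel) = (\<integral>\<^sup>+v. (\<integral>\<^sup>+t. f t v \<partial>lborel) \<partial>M)"
    by (rule lborel_M.Fubini'[symmetric]) measurable
  then show ?thesis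
    by (simp add: integral_t integral_v cong: nn_integral_cong)
qed

lemma (in prob_space) set_integral_measure_ge_eq_integral_min:
  assumes S[measurable]: "S \<in> borel_measurable M"
    and S0: "\<And>v. v \<in> space M \<Longrightarrow> 0 \<le> S v" and c0: "0 \<le> c"
  shows "(LBINT t:{0..c}. measure M {v \<in> space M. S v \<ge> t}) = (\<integral>v. min c (S v) \<partial>M)"
proof -
  define P where "P t = measure M {v \<in> space M. S v \<ge> t}" for t
  have "mono (\<lambda>t. - P t)"
    unfolding P_def by (intro monoI le_imp_neg_le finite_measure_mono) auto
  then have "(\<lambda>t. - (- P t)) \<in> borel_measurable borel"
    by (intro borel_measurable_uminus borel_measurable_mono)
  then have [measurable]: "P \<in> borel_measurable borel" by simp
  have "integrable M (\<lambda>v. min c (S v))"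
    using S S0 c0 by (intro integrable_const_bound[where B = c]) auto
  then have "(\<integral>\<^sup>+v. ennreal (min c (S v)) \<partial>M) = ennreal (\<integral>v. min c (S v) \<partial>M)"
    using S0 c0 by (intro nn_integral_eq_integral) auto
  then have nn: "(\<integral>\<^sup>+t. ennreal (indicator {0..c} t * P t) \<partial>lborel) = ennreal (\<integral>v. min c (S v) \<partial>M)"
    unfolding P_def using nn_integral_measure_ge_eq_nn_integral_min[OF S S0 c0] by simp
  have "(LBINT t:{0..c}. P t) = (\<integral>t. indicator {0..c} t * P t \<partial>lborel)"
    by (simp add: set_lebesgue_integral_def)
  also have "\<dots> = enn2real (\<integral>\<^sup>+t. ennreal (indicator {0..c} t * P t) \<partial>lborel)"
    by (intro integral_eq_nn_integral) (auto simp: P_def)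
  also have "\<dots> = (\<integral>v. min c (S v) \<partial>M)"
    using nn S0 c0 by (simp add: integral_nonneg_AE)
  finally show ?thesis by (simp add: P_def)
qed

lemma (in prob_space) set_integral_measure_ge_le:
  assumes "S \<in> borel_measurable M" "\<And>v. v \<in> space M \<Longrightarrow> 0 \<le> S v" "0 \<le> c"
  shows "(LBINT t:{0..c}. measure M {v \<in> space M. S v \<ge> t}) \<le> c"
proof -
  have "(\<integral>v. min c (S v) \<partial>M) \<le> (\<integral>v. c \<partial>M)"
    using assms by (intro integral_mono integrable_const_bound[where B = c]) auto
  then show ?thesis using assms by (simp add: set_integral_measure_ge_eq_integral_min prob_space)
qed

lemma mult_shortfall_le_max_residual:
  fixes s c \<beta> :: real
  assumes "0 \<le> s" "c \<le> 1" "\<beta> * c \<le> 1" "0 < \<beta>"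
  shows "\<beta> * (c - min c s) \<le> max 0 (1 - s)"
proof (cases "c \<le> s")
  case False
  show ?thesis
  proof (cases "1 \<le> \<beta>")
    case True
    then have "s \<le> \<beta> * s" using assms(1) by (simp add: mult_le_cancel_right1)
    with False assms(3) show ?thesis by (simp add: right_diff_distrib)
  next
    case False': False
    then have "\<beta> * (c - s) \<le> c - s" using False assms(4) by (intro mult_left_le_one_le) auto
    moreover have "\<beta> * (c - min c s) = \<beta> * (c - s)" "1 - s \<le> max 0 (1 - s)" using False by auto
    ultimately show ?thesis using assms(2) by linarith
  qed
qed simp

lemma (in prob_space) integral_max_residual_ge:
  assumes S: "S \<in> borel_measurable M" and S0: "\<And>v. v \<in> space M \<Longrightarrow> 0 \<le> S v"
    and "0 < \<beta>" "0 \<le> c" "c \<le> 1" "\<beta> * c \<le> 1"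
  shows "\<beta> * (c - (LBINT t:{0..c}. measure M {v \<in> space M. S v \<ge> t})) \<le> (\<integral>v. max 0 (1 - S v) \<partial>M)"
proof -
  have min_integrable: "integrable M (\<lambda>v. min c (S v))"
    by (rule integrable_const_bound[where B = c]) (use S S0 \<open>0 \<le> c\<close> in auto)
  have "\<beta> * (c - (LBINT t:{0..c}. measure M {v \<in> space M. S v \<ge> t}))
      = (\<integral>v. \<beta> * (c - min c (S v)) \<partial>M)"
    using min_integrable S S0 \<open>0 \<le> c\<close>
    by (simp add: set_integral_measure_ge_eq_integral_min prob_space)
  also have "\<dots> \<le> (\<integral>v. max 0 (1 - S v) \<partial>M)"
  proof (rule integral_mono)
    show "integrable M (\<lambda>v. max 0 (1 - S v))"
      by (rule integrable_const_bound[where B = 1]) (use S S0 in auto)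
  qed (use min_integrable S0 assms mult_shortfall_le_max_residual in auto)
  finally show ?thesis .
qed

text \<open>\<open>h\<close> need not be integrable, so the factorisation is stated for nonnegative integrals.\<close>

lemma integral_mult_le_of_nn_integral_factor:
  fixes a h g u :: "'a \<Rightarrow> real"
  assumes a: "integrable M a" "\<And>v. v \<in> space M \<Longrightarrow> 0 \<le> a v"
    and h0: "\<And>v. v \<in> space M \<Longrightarrow> 0 \<le> h v"
    and factor: "(\<integral>\<^sup>+v. ennreal (a v * h v) \<partial>M) = (\<integral>\<^sup>+v. ennreal (a v) \<partial>M) * (\<integral>\<^sup>+v. ennreal (h v) \<partial>M)"
    and u: "integrable M u" "\<And>v. v \<in> space M \<Longrightarrow> a v * h v \<le> u v"
    and g: "integrable M g" "\<And>v. v \<in> space M \<Longrightarrow> g v \<le> h v"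
    and K: "0 \<le> K" "K \<le> (\<integral>v. a v \<partial>M)"
  shows "K * (\<integral>v. g v \<partial>M) \<le> (\<integral>v. u v \<partial>M)"
proof -
  have u_nonneg: "0 \<le> u v" if "v \<in> space M" for v
    using a(2)[OF that] h0[OF that] u(2)[OF that] by (smt (verit) mult_nonneg_nonneg)
  then have u0: "0 \<le> (\<integral>v. u v \<partial>M)" by (intro integral_nonneg_AE AE_I2)
  show ?thesis
  proof (cases "0 \<le> (\<integral>v. g v \<partial>M)")
    case False
    then show ?thesis using K(1) u0 by (smt (verit) mult_nonneg_nonpos)
  next
    case True
    have "(\<integral>v. g v \<partial>M) \<le> (\<integral>v. max 0 (g v) \<partial>M)"
      using g(1) by (intro integral_mono) auto
    then have "ennreal (\<integral>v. g v \<partial>M) \<le> (\<integral>\<^sup>+v. ennreal (max 0 (g v)) \<partial>M)"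
      using g(1) by (subst nn_integral_eq_integral) auto
    also have "\<dots> \<le> (\<integral>\<^sup>+v. ennreal (h v) \<partial>M)"
      using g(2) h0 by (intro nn_integral_mono) (auto intro: ennreal_leI)
    finally have g_h: "ennreal (\<integral>v. g v \<partial>M) \<le> (\<integral>\<^sup>+v. ennreal (h v) \<partial>M)" .
    have "ennreal (K * (\<integral>v. g v \<partial>M)) \<le> ennreal (\<integral>v. a v \<partial>M) * (\<integral>\<^sup>+v. ennreal (h v) \<partial>M)"
      using K True g_h by (simp add: ennreal_mult mult_mono)
    also have "\<dots> = (\<integral>\<^sup>+v. ennreal (a v * h v) \<partial>M)"
      using a by (simp add: factor nn_integral_eq_integral)
    also have "\<dots> \<le> (\<integral>\<^sup>+v. ennreal (u v) \<partial>M)"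
      using u(2) by (intro nn_integral_mono) (auto intro: ennreal_leI)
    also have "\<dots> = ennreal (\<integral>v. u v \<partial>M)"
      using u(1) u_nonneg by (intro nn_integral_eq_integral AE_I2)
    finally show ?thesis using u0 by simp
  qed
qed

locale posted_price_market =
  fixes n :: nat and F :: "nat \<Rightarrow> (real \<Rightarrow> real) measure"
    and ystar :: "nat \<Rightarrow> (real \<Rightarrow> real) \<Rightarrow> real \<Rightarrow> real" and p :: real
  assumes prob_space_F: "\<And>j. j < n \<Longrightarrow> prob_space (F j)"
    and valuation_F: "\<And>j w. j < n \<Longrightarrow> w \<in> space (F j) \<Longrightarrow> valuation w"
    and evaluation_measurable: "\<And>j z. j < n \<Longrightarrow> (\<lambda>w. w z) \<in> borel_measurable (F j)"
    and demand: "\<And>j w. j < n \<Longrightarrow> w \<in> space (F j) \<Longrightarrow> is_demand w p (ystar j w p)"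
    and demand_measurable: "\<And>j. j < n \<Longrightarrow> (\<lambda>w. ystar j w p) \<in> borel_measurable (F j)"
begin

abbreviation profiles :: "(nat \<Rightarrow> real \<Rightarrow> real) measure" where
  "profiles \<equiv> PiM {..<n} F"

definition earlier_demand :: "(nat \<Rightarrow> nat) \<Rightarrow> nat \<Rightarrow> (nat \<Rightarrow> real \<Rightarrow> real) \<Rightarrow> real" where
  "earlier_demand \<pi> i v = (\<Sum>j\<in>before n \<pi> i. ystar j (v j) p)"

lemma prob_space_profiles: "prob_space profiles"
  by (intro prob_space_PiM prob_space_F) simp

lemma profile_component: "v \<in> space profiles \<Longrightarrow> j < n \<Longrightarrow> v j \<in> space (F j)"
  by (auto simp: space_PiM)

lemma earlier_demand_nonneg:
  assumes "v \<in> space profiles"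
  shows "0 \<le> earlier_demand \<pi> i v"
  unfolding earlier_demand_def
proof (rule sum_nonneg)
  fix j assume "j \<in> before n \<pi> i"
  then have "j < n" by (simp add: before_def)
  then show "0 \<le> ystar j (v j) p"
    using demand[OF _ profile_component[OF assms]] by (simp add: is_demand_def)
qed

lemma borel_measurable_earlier_demand:
  assumes "before n \<pi> i \<subseteq> K"
  shows "earlier_demand \<pi> i \<in> borel_measurable (PiM K F)"
  unfolding earlier_demand_def
proof (rule borel_measurable_sum)
  fix j assume "j \<in> before n \<pi> i"
  with assms have "j \<in> K" "j < n" by (auto simp: before_def)
  then show "(\<lambda>v. ystar j (v j) p) \<in> borel_measurable (PiM K F)"
    using measurable_compose[OF measurable_component_singleton[of j K F] demand_measurable[of j]]
    by simp
qed

lemma indirect_utility_ge: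
  assumes "v \<in> space profiles" "j < n" "z \<in> {0..1}"
  shows "v j z - p * z \<le> indirect_utility p (v j)"
proof -
  have "valuation (v j)" "is_demand (v j) p (ystar j (v j) p)"
    using assms(1,2) by (auto intro: valuation_F demand profile_component)
  then show ?thesis using assms(3) by (simp add: indirect_utility_eq is_demand_def)
qed

lemma indirect_utility_component_nonneg:
  "v \<in> space profiles \<Longrightarrow> j < n \<Longrightarrow> 0 \<le> indirect_utility p (v j)"
  using indirect_utility_nonneg valuation_F demand profile_component by blast

lemma utility_ge_residual_mult:
  assumes "v \<in> space profiles" "i < n"
  shows "max 0 (1 - earlier_demand \<pi> i v) * indirect_utility p (v i) \<le> utility n ystar v p \<pi> i"
  using utility_ge_residual_mult_indirect_utility earlier_demand_nonneg assms
    valuation_F demand profile_component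
  unfolding earlier_demand_def by blast

lemma nn_integral_residual_mult_indirect_utility:
  assumes "i < n"
  shows "(\<integral>\<^sup>+v. ennreal (max 0 (1 - earlier_demand \<pi> i v) * indirect_utility p (v i)) \<partial>profiles)
    = (\<integral>\<^sup>+v. ennreal (max 0 (1 - earlier_demand \<pi> i v)) \<partial>profiles)
      * (\<integral>\<^sup>+v. ennreal (indirect_utility p (v i)) \<partial>profiles)"
proof (rule nn_integral_PiM_mult_component)
  have "before n \<pi> i \<subseteq> {..<n} - {i}" by (auto simp: before_def)
  note [measurable] = borel_measurable_earlier_demand[OF this]
  show "(\<lambda>v. max 0 (1 - earlier_demand \<pi> i v)) \<in> borel_measurable (PiM ({..<n} - {i}) F)"
    by measurable
  have "earlier_demand \<pi> i (v(i := y)) = earlier_demand \<pi> i v" for v y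
    unfolding earlier_demand_def by (intro sum.cong) (auto simp: before_def)
  then show "max 0 (1 - earlier_demand \<pi> i (v(i := y))) = max 0 (1 - earlier_demand \<pi> i v)" for v y
    by simp
  show "indirect_utility p \<in> borel_measurable (F i)"
    using assms evaluation_measurable demand by (intro borel_measurable_indirect_utility)
  show "0 \<le> indirect_utility p w" if "w \<in> space (F i)" for w
    using assms that valuation_F demand by (intro indirect_utility_nonneg)
qed (use assms prob_space_F in auto)

lemma expected_utility_ge:
  assumes i: "i < n" and u: "integrable profiles (\<lambda>v. utility n ystar v p \<pi> i)"
    and g: "integrable profiles g" "\<And>v. v \<in> space profiles \<Longrightarrow> g v \<le> indirect_utility p (v i)"
    and \<beta>: "0 < \<beta>" and c: "0 \<le> c" "c \<le> 1" "\<beta> * c \<le> 1"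
  shows "\<beta> * (c - (LBINT t:{0..c}. measure profiles {v \<in> space profiles. earlier_demand \<pi> i v \<ge> t}))
      * (\<integral>v. g v \<partial>profiles) \<le> (\<integral>v. utility n ystar v p \<pi> i \<partial>profiles)"
proof (rule integral_mult_le_of_nn_integral_factor[where
      a = "\<lambda>v. max 0 (1 - earlier_demand \<pi> i v)" and h = "\<lambda>v. indirect_utility p (v i)"])
  interpret prob_space profiles by (rule prob_space_profiles)
  have S: "earlier_demand \<pi> i \<in> borel_measurable profiles"
    "\<And>v. v \<in> space profiles \<Longrightarrow> 0 \<le> earlier_demand \<pi> i v"
    using earlier_demand_nonneg by (auto intro: borel_measurable_earlier_demand simp: before_def)
  then show "integrable profiles (\<lambda>v. max 0 (1 - earlier_demand \<pi> i v))"
    by (intro integrable_const_bound[where B = 1]) auto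
  show "\<beta> * (c - (LBINT t:{0..c}. measure profiles {v \<in> space profiles. earlier_demand \<pi> i v \<ge> t}))
      \<le> (\<integral>v. max 0 (1 - earlier_demand \<pi> i v) \<partial>profiles)"
    using S \<beta> c by (rule integral_max_residual_ge)
  show "0 \<le> \<beta> * (c - (LBINT t:{0..c}. measure profiles {v \<in> space profiles. earlier_demand \<pi> i v \<ge> t}))"
    using S c \<beta> set_integral_measure_ge_le by simp
  show "(\<integral>\<^sup>+v. ennreal (max 0 (1 - earlier_demand \<pi> i v) * indirect_utility p (v i)) \<partial>profiles)
    = (\<integral>\<^sup>+v. ennreal (max 0 (1 - earlier_demand \<pi> i v)) \<partial>profiles)
      * (\<integral>\<^sup>+v. ennreal (indirect_utility p (v i)) \<partial>profiles)"
    using i by (rule nn_integral_residual_mult_indirect_utility)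
qed (use i u g indirect_utility_component_nonneg utility_ge_residual_mult in auto)

end

theorem mainTheorem1:
  fixes n :: nat
    and F :: "nat \<Rightarrow> (real \<Rightarrow> real) measure"
    and ystar :: "nat \<Rightarrow> (real \<Rightarrow> real) \<Rightarrow> real \<Rightarrow> real"
    and x :: "(nat \<Rightarrow> real \<Rightarrow> real) \<Rightarrow> nat \<Rightarrow> real"
    and i :: nat and p :: real and \<pi> :: "nat \<Rightarrow> nat" and \<beta> :: real
  defines "M \<equiv> PiM {..<n} F"
  assumes F_prob: "\<And>j. j < n \<Longrightarrow> prob_space (F j)"
    and F_val: "\<And>j w. j < n \<Longrightarrow> w \<in> space (F j) \<Longrightarrow> valuation w"
    and F_eval: "\<And>j z. j < n \<Longrightarrow> (\<lambda>w. w z) \<in> borel_measurable (F j)"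
    and ystar_opt: "\<And>j w q. j < n \<Longrightarrow> w \<in> space (F j) \<Longrightarrow> q > 0 \<Longrightarrow> is_demand w q (ystar j w q)"
    and ystar_meas: "\<And>j q. j < n \<Longrightarrow> q > 0 \<Longrightarrow> (\<lambda>w. ystar j w q) \<in> borel_measurable (F j)"
    and x_opt: "\<And>v. v \<in> space M \<Longrightarrow> welfare_opt n v (x v)"
    and x_meas: "\<And>j. j < n \<Longrightarrow> (\<lambda>v. x v j) \<in> borel_measurable M"
    and x_int: "\<And>j. j < n \<Longrightarrow> integrable M (\<lambda>v. v j (x v j))"
    and u_int: "integrable M (\<lambda>v. utility n ystar v p \<pi> i)"
    and i: "i < n" and p: "p > 0" and \<pi>: "\<pi> permutes {..<n}" and \<beta>: "\<beta> > 0"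
  shows "(\<integral>v. utility n ystar v p \<pi> i \<partial>M)
    \<ge> \<beta> * ((\<integral>v. v i (x v i) \<partial>M) - p * (\<integral>v. x v i \<partial>M))
        * (1 - exp (-1/\<beta>)
           - (LBINT t:{0..1 - exp (-1/\<beta>)}.
                measure M {v \<in> space M. (\<Sum>j\<in>before n \<pi> i. ystar j (v j) p) \<ge> t}))"
proof -
  interpret posted_price_market n F ystar p
    using F_prob F_val F_eval ystar_opt[OF _ _ p] ystar_meas[OF _ p] by (intro posted_price_market.intro)
  interpret prob_space M unfolding M_def by (rule prob_space_profiles)
  define c where "c = 1 - exp (-1/\<beta>)"
  \<comment> \<open>The only property of \<open>c\<close> that matters is \<open>\<beta> c \<le> 1\<close>.\<close>
  have c: "0 \<le> c" "c \<le> 1" "\<beta> * c \<le> 1"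
    using exp_ge_add_one_self[of "-1/\<beta>"] \<beta> by (auto simp: c_def field_simps)
  have x_share: "0 \<le> x v i" "x v i \<le> 1" if "v \<in> space M" for v
    using welfare_opt_share_bounds[OF x_opt[OF that] i] by auto
  have x_integrable: "integrable M (\<lambda>v. x v i)"
    using x_share x_meas[OF i] by (intro integrable_const_bound[where B = 1]) auto
  have "\<beta> * (c - (LBINT t:{0..c}. measure M {v \<in> space M. earlier_demand \<pi> i v \<ge> t}))
      * (\<integral>v. v i (x v i) - p * x v i \<partial>M) \<le> (\<integral>v. utility n ystar v p \<pi> i \<partial>M)"
    unfolding M_def
  proof (rule expected_utility_ge[OF i u_int[unfolded M_def] _ _ \<beta> c])
    show "integrable profiles (\<lambda>v. v i (x v i) - p * x v i)"
      using x_int[OF i] x_integrable unfolding M_def by auto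
    show "v i (x v i) - p * x v i \<le> indirect_utility p (v i)" if "v \<in> space profiles" for v
      using that i x_share[of v] unfolding M_def by (intro indirect_utility_ge) auto
  qed
  moreover have "(\<integral>v. v i (x v i) - p * x v i \<partial>M) = (\<integral>v. v i (x v i) \<partial>M) - p * (\<integral>v. x v i \<partial>M)"
    using x_int[OF i] x_integrable by simp
  ultimately show ?thesis
    unfolding c_def earlier_demand_def by (simp add: ac_simps)
qed

end
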